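(* The $R$-linear map $\kappa:V^*\to V^{\otimes n-1}$ defined by \[ v_i^*\mapsto (-q)^i\sum_{w\in\mathfrak S_{n-1}}(-q)^{l(w)}v_{(1,2,\ldots,\hat i,\ldots,n).w}\qquad(1\le i\le n) \] is a well-defined monomorphism of $\mathbf U'$-modules. (Here $(1,\ldots,\hat i,\ldots,n)$ is the multi-index of length $n-1$ obtained by omitting $i$.)
   Context: $R$ commutative ring with $1$, $q\in R$ invertible, $n\ge 1$. $\mathbf U'$ is the $R$-form (obtained by base change $\mathbb Z[q,q^{-1}]\to R$, $q\mapsto q$) of the $\mathbb Z[q,q^{-1}]$-subalgebra of $U_q(\mathfrak{gl}_n)$ generated by the $K_i=q^{h_i-h_{i+1}}$ and the divided powers $e_i^{(l)}=e_i^l/[l]_q!$, $f_i^{(l)}=f_i^l/[l]_q!$ ($1\le i\le n-1$, $l\ge 0$, $[l]_q=\sum_{t=0}^{l-1}q^{2t-l+1}$); it is a sub-Hopf algebra of the analogous $R$-form $\mathbf U$ of $U_q(\mathfrak{gl}_n)$, with $\Delta(K_i)=K_i\otimes K_i$, $\Delta(e_i)=e_i\otimes K_i^{-1}+1\otimes e_i$, $\Delta(f_i)=f_i\otimes 1+K_i\otimes f_i$, $S(K_i)=K_i^{-1}$, $S(e_i)=-e_iK_i$, $S(f_i)=-K_i^{-1}f_i$. $V=R^n$ with basis $v_1,\dots,v_n$: $K_iv_j=q^{\delta_{ij}-\delta_{i+1,j}}v_j$, $e_iv_{i+1}=v_i$, $e_iv_j=0$ for $j\ne i+1$, $f_iv_i=v_{i+1}$,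 $f_iv_j=0$ for $j\neq i$, and $e_i^{(l)},f_i^{(l)}$ act as $0$ for $l\ge2$. $\mathbf U'$ acts on tensor powers via $\Delta$ and on $V^*=\mathrm{Hom}_R(V,R)$ (dual basis $v_1^*,\dots,v_n^*$) by $(xf)(w)=f(S(x)w)$. For a multi-index $\mathbf i=(i_1,\dots,i_m)$, $v_{\mathbf i}=v_{i_1}\otimes\cdots\otimes v_{i_m}$; $\mathfrak S_m$ acts on multi-indices on the right by place permutations ($\mathbf i.s_t$ swaps the entries in positions $t,t+1$); $l(w)$ is the Coxeter length. *)

theory Defs
  imports "HOL-Combinatorics.Permutations"
begin

text \<open>Integer powers of the invertible element q (qi is its inverse).\<close>
definition qpow :: "'a::comm_ring_1 \<Rightarrow> 'a \<Rightarrow> int \<Rightarrow> 'a" where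
  "qpow q qi z = (if 0 \<le> z then q ^ nat z else qi ^ nat (- z))"

text \<open>Exponent of K_i on v_j: K_i v_j = q^(wt i j) v_j.\<close>
definition wt :: "nat \<Rightarrow> nat \<Rightarrow> int" where
  "wt i j = (if j = i then 1 else 0) - (if j = Suc i then 1 else 0)"

definition wtL :: "nat \<Rightarrow> nat list \<Rightarrow> int" where
  "wtL i ks = sum_list (map (wt i) ks)"

text \<open>Generators of U': K_i^z (z integer), e_i^(l), f_i^(l).\<close>
datatype gen = GK nat int | GE nat nat | GF nat nat

definition gens :: "nat \<Rightarrow> gen set" where
  "gens n = {GK i z | i z. 1 \<le> i \<and> i < n} \<union> {GE i l | i l. 1 \<le> i \<and> i < n}
            \<union> {GF i l | i l. 1 \<le> i \<and> i < n}"

text \<open>Matrix coefficients on V: matV q qi g a b = coefficient of v_a in g v_b.\<close>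
fun matV :: "'a::comm_ring_1 \<Rightarrow> 'a \<Rightarrow> gen \<Rightarrow> nat \<Rightarrow> nat \<Rightarrow> 'a" where
  "matV q qi (GK i z) a b = (if a = b then qpow q qi (z * wt i b) else 0)"
| "matV q qi (GE i l) a b = (if l = 0 then (if a = b then 1 else 0)
      else if l = 1 then (if b = Suc i \<and> a = i then 1 else 0) else 0)"
| "matV q qi (GF i l) a b = (if l = 0 then (if a = b then 1 else 0)
      else if l = 1 then (if b = i \<and> a = Suc i then 1 else 0) else 0)"

text \<open>Matrix coefficients on V of the antipode S(g), using
  S(K^z) = K^(-z), S(e^(l)) = (-1)^l q^(l(l-1)) e^(l) K^l,
  S(f^(l)) = (-1)^l q^(-l(l-1)) K^(-l) f^(l)
  (consequences of S(e)=-eK, S(f)=-K^(-1)f and S antimultiplicative).\<close>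
fun matS :: "'a::comm_ring_1 \<Rightarrow> 'a \<Rightarrow> gen \<Rightarrow> nat \<Rightarrow> nat \<Rightarrow> 'a" where
  "matS q qi (GK i z) a b = matV q qi (GK i (- z)) a b"
| "matS q qi (GE i l) a b = (- 1) ^ l * q ^ (l * (l - 1)) * matV q qi (GE i l) a b
      * qpow q qi (int l * wt i b)"
| "matS q qi (GF i l) a b = (- 1) ^ l * qpow q qi (- int (l * (l - 1)))
      * qpow q qi (- (int l * wt i a)) * matV q qi (GF i l) a b"

text \<open>Matrix coefficients on tensor powers V^{\<otimes>m} = V \<otimes> V^{\<otimes>(m-1)}, via the coproduct:
  Delta(K)=K\<otimes>K, Delta(e^(l)) = sum_{a+b=l} q^(ab) e^(a) \<otimes> K^(-a) e^(b),
  Delta(f^(l)) = sum_{a+b=l} q^(ab) K^a f^(b) \<otimes> f^(a); on V^{\<otimes>0} = R the counit.\<close>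
fun matT :: "'a::comm_ring_1 \<Rightarrow> 'a \<Rightarrow> gen \<Rightarrow> nat list \<Rightarrow> nat list \<Rightarrow> 'a" where
  "matT q qi g [] [] = (case g of GK i z \<Rightarrow> 1 | GE i l \<Rightarrow> (if l = 0 then 1 else 0)
                                 | GF i l \<Rightarrow> (if l = 0 then 1 else 0))"
| "matT q qi (GK i z) (k # ks) (j # js) = matV q qi (GK i z) k j * matT q qi (GK i z) ks js"
| "matT q qi (GE i l) (k # ks) (j # js) =
     (\<Sum>a\<le>l. q ^ (a * (l - a)) * matV q qi (GE i a) k j * qpow q qi (- (int a * wtL i ks))
              * matT q qi (GE i (l - a)) ks js)"
| "matT q qi (GF i l) (k # ks) (j # js) =
     (\<Sum>a\<le>l. q ^ (a * (l - a)) * qpow q qi (int a * wt i k) * matV q qi (GF i (l - a)) k j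
              * matT q qi (GF i a) ks js)"
| "matT q qi g (k # ks) [] = 0"
| "matT q qi g [] (j # js) = 0"

text \<open>Multi-indices of length m with entries in {1..n}: the basis of V^{\<otimes>m}.\<close>
definition tup :: "nat \<Rightarrow> nat \<Rightarrow> nat list set" where
  "tup n m = {js. length js = m \<and> set js \<subseteq> {1..n}}"

text \<open>Elements of V^{\<otimes>m} are coefficient functions x (x js = coefficient of v_js),
  elements of V^* are coefficient functions c (c j = coefficient of v_j^*).\<close>
definition actT :: "'a::comm_ring_1 \<Rightarrow> 'a \<Rightarrow> nat \<Rightarrow> nat \<Rightarrow> gen \<Rightarrow> (nat list \<Rightarrow> 'a) \<Rightarrow> nat list \<Rightarrow> 'a" where
  "actT q qi n m g x = (\<lambda>ks. \<Sum>js\<in>tup n m. matT q qi g ks js * x js)"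

text \<open>Action on V^*: (x.phi)(w) = phi(S(x) w), so x v_j^* = sum_k [S(x)]_{j,k} v_k^*.\<close>
definition actD :: "'a::comm_ring_1 \<Rightarrow> 'a \<Rightarrow> nat \<Rightarrow> gen \<Rightarrow> (nat \<Rightarrow> 'a) \<Rightarrow> nat \<Rightarrow> 'a" where
  "actD q qi n g c = (\<lambda>k. \<Sum>j\<in>{1..n}. matS q qi g j k * c j)"

text \<open>Coxeter length of w in S_m (permutations of positions {0..<m}) = number of inversions.\<close>
definition perm_len :: "nat \<Rightarrow> (nat \<Rightarrow> nat) \<Rightarrow> nat" where
  "perm_len m w = card {(a, b). a < b \<and> b < m \<and> w b < w a}"

text \<open>Right place-permutation action on multi-indices: (i.w)_t = i_{w(t)}.\<close>
definition place_perm :: "nat list \<Rightarrow> (nat \<Rightarrow> nat) \<Rightarrow> nat list" where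
  "place_perm is w = map (\<lambda>t. is ! w t) [0..<length is]"

definition omit :: "nat \<Rightarrow> nat \<Rightarrow> nat list" where
  "omit n i = filter (\<lambda>j. j \<noteq> i) [1..<Suc n]"

definition kappa_coef :: "'a::comm_ring_1 \<Rightarrow> nat \<Rightarrow> nat \<Rightarrow> nat list \<Rightarrow> 'a" where
  "kappa_coef q n i ks = (- q) ^ i *
     (\<Sum>w\<in>{w. w permutes {..<n - 1}}. (- q) ^ perm_len (n - 1) w *
        (if ks = place_perm (omit n i) w then 1 else 0))"

definition kappa :: "'a::comm_ring_1 \<Rightarrow> nat \<Rightarrow> (nat \<Rightarrow> 'a) \<Rightarrow> nat list \<Rightarrow> 'a" where
  "kappa q n c = (\<lambda>ks. \<Sum>i\<in>{1..n}. c i * kappa_coef q n i ks)"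

end

theory Submission
  imports Defs
begin

text \<open>The map sends \<open>v_i\<^sup>*\<close> to \<open>(-q)^i\<close> times the q-antisymmetric tensor
  \<open>A_S = \<Sum> (-q)^inv(ks) v_ks\<close> over the enumerations \<open>ks\<close> of \<open>S = {1..n} - {i}\<close>.
  So everything reduces to how the generators act on such \<open>A_S\<close>: \<open>K_i\<close> acts by the scalar
  \<open>q^([i \<in> S] - [i+1 \<in> S])\<close>; divided powers of order at least 2 kill \<open>A_S\<close>, because no
  entry of \<open>ks\<close> repeats; and, peeling off the first tensor factor with the coproduct,
  \<open>e_i A_S = A_(S - {i+1} \<union> {i})\<close> if \<open>i+1 \<in> S\<close> and \<open>i \<notin> S\<close>, and \<open>e_i A_S = 0\<close>
  otherwise (if both \<open>i, i+1 \<in> S\<close>, the two terms producing a repeated entry cancel), and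
  dually for \<open>f_i\<close>. These are exactly the formulas of the contragredient action on the
  \<open>v_j\<^sup>*\<close>, the factors \<open>(-q)^j\<close> absorbing the scalars. Injectivity holds because the
  coefficient of \<open>v_(1,..,\<hat>i,..,n)\<close> in the image of \<open>\<Sum> c_i v_i\<^sup>*\<close> is \<open>(-q)^i c_i\<close>.\<close>

section \<open>Integer powers of q\<close>

lemma qpow_0 [simp]: "qpow q qi 0 = 1"
  and qpow_1 [simp]: "qpow q qi 1 = q"
  and qpow_minus_1 [simp]: "qpow q qi (- 1) = qi"
  by (simp_all add: qpow_def)

lemma inverse_pair_cancel:
  fixes q qi :: "'a::comm_ring_1"
  assumes "q * qi = 1"
  shows "q * (qi * x) = x" and "qi * (q * x) = x"
  using assms by (simp_all add: mult.assoc[symmetric] mult.commute[of qi q])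

lemma qpow_int_diff:
  assumes "q * qi = 1"
  shows "qpow q qi (int a - int b) = q ^ a * qi ^ b"
proof (cases "b \<le> a")
  case True
  then have "q ^ a = q ^ (a - b) * q ^ b" by (simp flip: power_add)
  then have "q ^ a * qi ^ b = q ^ (a - b) * (q * qi) ^ b" by (simp add: power_mult_distrib mult_ac)
  with True assms show ?thesis by (simp add: qpow_def nat_diff_distrib)
next
  case False
  then have "qi ^ b = qi ^ (b - a) * qi ^ a" by (simp flip: power_add)
  then have "q ^ a * qi ^ b = qi ^ (b - a) * (q * qi) ^ a" by (simp add: power_mult_distrib mult_ac)
  with False assms show ?thesis by (simp add: qpow_def nat_diff_distrib)
qed

lemma qpow_add:
  assumes "q * qi = 1"
  shows "qpow q qi (x + y) = qpow q qi x * qpow q qi y"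
proof -
  have split: "z = int (nat z) - int (nat (- z))" for z :: int by simp
  have "qpow q qi (x + y) = qpow q qi (int (nat x + nat y) - int (nat (- x) + nat (- y)))"
    by (rule arg_cong[where f = "qpow q qi"]) simp
  also have "\<dots> = (q ^ nat x * qi ^ nat (- x)) * (q ^ nat y * qi ^ nat (- y))"
    by (simp only: qpow_int_diff[OF assms] power_add mult_ac)
  also have "\<dots> = qpow q qi x * qpow q qi y"
    by (simp only: qpow_int_diff[OF assms, symmetric] flip: split)
  finally show ?thesis .
qed

section \<open>Generators acting on tensor powers\<close>

lemma Cons_in_tup_iff:
  "k # ks \<in> tup n m \<longleftrightarrow> (\<exists>m'. m = Suc m' \<and> k \<in> {1..n} \<and> ks \<in> tup n m')"
  by (cases m) (auto simp: tup_def)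

lemma finite_tup [simp]: "finite (tup n m)"
proof -
  have "tup n m = {xs. set xs \<subseteq> {1..n} \<and> length xs = m}" by (auto simp: tup_def)
  then show ?thesis using finite_lists_length_eq[of "{1..n}" m] by simp
qed

lemma sum_tup_Suc:
  "(\<Sum>js\<in>tup n (Suc m). f js) = (\<Sum>j\<in>{1..n}. \<Sum>js\<in>tup n m. f (j # js))"
proof -
  have "tup n (Suc m) = (\<lambda>(j, js). j # js) ` ({1..n} \<times> tup n m)"
    by (auto simp: tup_def length_Suc_conv image_iff)
  moreover have "inj_on (\<lambda>(j, js). j # js) ({1..n} \<times> tup n m)" by (auto simp: inj_on_def)
  ultimately show ?thesis by (simp add: sum.reindex sum.cartesian_product split_def)
qed

lemma matT_GE_0: "matT q qi (GE i 0) ks js = (if ks = js then 1 else 0)"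
  by (induction ks arbitrary: js; case_tac js; simp)

lemma matT_GF_0: "matT q qi (GF i 0) ks js = (if ks = js then 1 else 0)"
  by (induction ks arbitrary: js; case_tac js; simp)

lemma wtL_Nil [simp]: "wtL i [] = 0"
  and wtL_Cons [simp]: "wtL i (k # ks) = wt i k + wtL i ks"
  by (simp_all add: wtL_def)

lemma matT_GK:
  assumes "q * qi = 1"
  shows "matT q qi (GK i z) ks js = (if ks = js then qpow q qi (z * wtL i ks) else 0)"
  by (induction ks arbitrary: js; case_tac js; simp add: qpow_add[OF assms, symmetric] distrib_left)

lemma matT_GE_1_Cons:
  "matT q qi (GE i 1) (k # ks) (j # js) =
     (if k = j then matT q qi (GE i 1) ks js else 0)
     + (if j = Suc i \<and> k = i \<and> ks = js then qpow q qi (- wtL i ks) else 0)"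
  by (auto simp: atMost_Suc matT_GE_0)

lemma matT_GF_1_Cons:
  "matT q qi (GF i 1) (k # ks) (j # js) =
     (if k = j then qpow q qi (wt i k) * matT q qi (GF i 1) ks js else 0)
     + (if j = i \<and> k = Suc i \<and> ks = js then 1 else 0)"
  by (auto simp: atMost_Suc matT_GF_0)

text \<open>The action of \<open>e_i\<close> and \<open>f_i\<close> on the \<open>m\<close>-th tensor power in coefficient form,
  obtained from \<open>V^(m+1) = V \<otimes> V^m\<close> and \<open>\<Delta>(e) = e \<otimes> K^-1 + 1 \<otimes> e\<close>,
  \<open>\<Delta>(f) = f \<otimes> 1 + K \<otimes> f\<close>.\<close>
fun e_tensor :: "'a::comm_ring_1 \<Rightarrow> 'a \<Rightarrow> nat \<Rightarrow> (nat list \<Rightarrow> 'a) \<Rightarrow> nat list \<Rightarrow> 'a" where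
  "e_tensor q qi i x [] = 0"
| "e_tensor q qi i x (k # ks) = e_tensor q qi i (\<lambda>ys. x (k # ys)) ks
     + (if k = i then qpow q qi (- wtL i ks) * x (Suc i # ks) else 0)"

fun f_tensor :: "'a::comm_ring_1 \<Rightarrow> 'a \<Rightarrow> nat \<Rightarrow> (nat list \<Rightarrow> 'a) \<Rightarrow> nat list \<Rightarrow> 'a" where
  "f_tensor q qi i x [] = 0"
| "f_tensor q qi i x (k # ks) = qpow q qi (wt i k) * f_tensor q qi i (\<lambda>ys. x (k # ys)) ks
     + (if k = Suc i then x (i # ks) else 0)"

lemma actT_GE_1:
  assumes "Suc i \<le> n"
  shows "ks \<in> tup n m \<Longrightarrow> actT q qi n m (GE i 1) x ks = e_tensor q qi i x ks"
proof (induction ks arbitrary: m x)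
  case Nil
  then show ?case by (simp add: actT_def tup_def)
next
  case (Cons k ks)
  then obtain m' where m: "m = Suc m'" and k: "k \<in> {1..n}" and ks: "ks \<in> tup n m'"
    by (auto simp: Cons_in_tup_iff)
  let ?on_head = "\<lambda>j js. if js = ks then if j = Suc i then if k = i
    then qpow q qi (- wtL i ks) * x (j # js) else 0 else 0 else 0"
  have "actT q qi n m (GE i 1) x (k # ks)
      = (\<Sum>j\<in>{1..n}. \<Sum>js\<in>tup n m'. if k = j then matT q qi (GE i 1) ks js * x (k # js) else 0)
      + (\<Sum>j\<in>{1..n}. \<Sum>js\<in>tup n m'. ?on_head j js)"
    unfolding actT_def m sum_tup_Suc matT_GE_1_Cons distrib_right sum.distrib
    by (intro arg_cong2[where f = "(+)"] sum.cong refl) auto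
  also have "(\<Sum>j\<in>{1..n}. \<Sum>js\<in>tup n m'. if k = j then matT q qi (GE i 1) ks js * x (k # js) else 0)
      = actT q qi n m' (GE i 1) (\<lambda>ys. x (k # ys)) ks"
    using k by (subst sum.swap) (simp add: actT_def sum.delta)
  also have "(\<Sum>j\<in>{1..n}. \<Sum>js\<in>tup n m'. ?on_head j js)
      = (if k = i then qpow q qi (- wtL i ks) * x (Suc i # ks) else 0)"
    using ks assms by simp
  finally show ?case using Cons.IH[OF ks] by simp
qed

lemma actT_GF_1:
  assumes "1 \<le> i" "i \<le> n"
  shows "ks \<in> tup n m \<Longrightarrow> actT q qi n m (GF i 1) x ks = f_tensor q qi i x ks"
proof (induction ks arbitrary: m x)
  case Nil
  then show ?case by (simp add: actT_def tup_def)
next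
  case (Cons k ks)
  then obtain m' where m: "m = Suc m'" and k: "k \<in> {1..n}" and ks: "ks \<in> tup n m'"
    by (auto simp: Cons_in_tup_iff)
  let ?on_head = "\<lambda>j js. if js = ks then if j = i then if k = Suc i then x (j # js) else 0 else 0 else 0"
  have "actT q qi n m (GF i 1) x (k # ks)
      = (\<Sum>j\<in>{1..n}. \<Sum>js\<in>tup n m'.
           if k = j then qpow q qi (wt i k) * (matT q qi (GF i 1) ks js * x (k # js)) else 0)
      + (\<Sum>j\<in>{1..n}. \<Sum>js\<in>tup n m'. ?on_head j js)"
    unfolding actT_def m sum_tup_Suc matT_GF_1_Cons distrib_right sum.distrib
    by (intro arg_cong2[where f = "(+)"] sum.cong refl) auto
  also have "(\<Sum>j\<in>{1..n}. \<Sum>js\<in>tup n m'.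
           if k = j then qpow q qi (wt i k) * (matT q qi (GF i 1) ks js * x (k # js)) else 0)
      = qpow q qi (wt i k) * actT q qi n m' (GF i 1) (\<lambda>ys. x (k # ys)) ks"
    using k by (subst sum.swap) (simp add: actT_def sum_distrib_left)
  also have "(\<Sum>j\<in>{1..n}. \<Sum>js\<in>tup n m'. ?on_head j js) = (if k = Suc i then x (i # ks) else 0)"
    using ks assms by simp
  finally show ?case using Cons.IH[OF ks] by simp
qed

lemma actT_scale: "actT q qi n m g (\<lambda>ys. a * x ys) ks = a * actT q qi n m g x ks"
  by (simp add: actT_def sum_distrib_left mult_ac)

lemma actT_GE_0: "ks \<in> tup n m \<Longrightarrow> actT q qi n m (GE i 0) x ks = x ks"
  unfolding actT_def matT_GE_0 by (simp add: if_distrib[of "\<lambda>a. a * _"] cong: if_cong)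

lemma actT_GF_0: "ks \<in> tup n m \<Longrightarrow> actT q qi n m (GF i 0) x ks = x ks"
  unfolding actT_def matT_GF_0 by (simp add: if_distrib[of "\<lambda>a. a * _"] cong: if_cong)

lemma actT_GK:
  assumes "q * qi = 1"
  shows "ks \<in> tup n m \<Longrightarrow> actT q qi n m (GK i z) x ks = qpow q qi (z * wtL i ks) * x ks"
  unfolding actT_def matT_GK[OF assms] by (simp add: if_distrib[of "\<lambda>a. a * _"] cong: if_cong)

lemma e_tensor_scale: "e_tensor q qi i (\<lambda>ys. a * x ys) ks = a * e_tensor q qi i x ks"
  by (induction ks arbitrary: x) (simp_all add: algebra_simps)

lemma f_tensor_scale: "f_tensor q qi i (\<lambda>ys. a * x ys) ks = a * f_tensor q qi i x ks"
  by (induction ks arbitrary: x) (simp_all add: algebra_simps)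

section \<open>q-antisymmetric tensors\<close>

definition inversions :: "nat list \<Rightarrow> nat" where
  "inversions ks = card {(a, b). a < b \<and> b < length ks \<and> ks ! b < ks ! a}"

text \<open>Coefficients of \<open>A_S = \<Sum> (-q)^inversions ks \<cdot> v_ks\<close>, summed over the enumerations
  \<open>ks\<close> of the finite set \<open>S\<close>.\<close>
definition qwedge :: "'a::comm_ring_1 \<Rightarrow> nat set \<Rightarrow> nat list \<Rightarrow> 'a" where
  "qwedge q S ks = (if distinct ks \<and> set ks = S then (- q) ^ inversions ks else 0)"

definition count_below :: "nat set \<Rightarrow> nat \<Rightarrow> nat" where
  "count_below S k = card {y \<in> S. y < k}"

lemma inversions_Cons:
  "inversions (k # ys) = card {b. b < length ys \<and> ys ! b < k} + inversions ys"
proof -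
  let ?head = "{b. b < length ys \<and> ys ! b < k}"
  let ?tail = "{(a, b). a < b \<and> b < length ys \<and> ys ! b < ys ! a}"
  have pairs: "{(a, b). a < b \<and> b < length (k # ys) \<and> (k # ys) ! b < (k # ys) ! a}
      = (\<lambda>b. (0, Suc b)) ` ?head \<union> map_prod Suc Suc ` ?tail" (is "?pairs = _")
  proof (intro set_eqI iffI)
    fix p assume "p \<in> ?pairs"
    then obtain a b where "p = (a, Suc b)" "a \<le> b" "b < length ys" "ys ! b < (k # ys) ! a"
      by (auto simp: less_Suc_eq_0_disj)
    then show "p \<in> (\<lambda>b. (0, Suc b)) ` ?head \<union> map_prod Suc Suc ` ?tail"
      by (cases a) (auto simp: image_iff)
  qed auto
  have "finite ?tail" by (rule finite_subset[of _ "{..<length ys} \<times> {..<length ys}"]) auto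
  then have "card ((\<lambda>b. (0, Suc b)) ` ?head \<union> map_prod Suc Suc ` ?tail)
      = card ((\<lambda>b. (0::nat, Suc b)) ` ?head) + card (map_prod Suc Suc ` ?tail)"
    by (intro card_Un_disjoint) auto
  also have "\<dots> = card ?head + card ?tail"
    by (simp add: card_image inj_on_def map_prod_def split_def)
  finally show ?thesis unfolding inversions_def pairs .
qed

lemma card_positions_below:
  assumes "distinct ys"
  shows "card {b. b < length ys \<and> ys ! b < k} = card {y \<in> set ys. y < k}"
proof -
  have "{y \<in> set ys. y < k} = nth ys ` {b. b < length ys \<and> ys ! b < k}"
    by (auto simp: in_set_conv_nth)
  moreover have "inj_on (nth ys) {b. b < length ys \<and> ys ! b < k}"
    using assms by (auto simp: inj_on_def nth_eq_iff_index_eq)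
  ultimately show ?thesis by (simp add: card_image)
qed

lemma qwedge_Nil: "qwedge q S [] = (if S = {} then 1 else 0)"
  by (simp add: qwedge_def inversions_def)

lemma qwedge_Cons:
  "qwedge q S (k # ys) = (if k \<in> S then (- q) ^ count_below S k * qwedge q (S - {k}) ys else 0)"
proof (cases "k \<in> S \<and> distinct ys \<and> set ys = S - {k}")
  case True
  then have "{y \<in> set ys. y < k} = {y \<in> S. y < k}" by auto
  then have "inversions (k # ys) = count_below S k + inversions ys"
    using True by (simp add: inversions_Cons card_positions_below count_below_def)
  with True show ?thesis by (auto simp: qwedge_def power_add)
next
  case False
  then show ?thesis by (auto simp: qwedge_def)
qed

lemma strict_sorted_nth_less_iff:
  fixes xs :: "'a::linorder list"
  assumes "sorted_wrt (<) xs" "a < length xs" "b < length xs"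
  shows "xs ! a < xs ! b \<longleftrightarrow> a < b"
  using assms sorted_wrt_nth_less[OF assms(1), of a b] sorted_wrt_nth_less[OF assms(1), of b a]
  by (cases a b rule: linorder_cases) auto

lemma inversions_strict_sorted:
  assumes "sorted_wrt (<) xs"
  shows "inversions xs = 0"
proof -
  have no_inversion: "{(a, b). a < b \<and> b < length xs \<and> xs ! b < xs ! a} = {}"
    using strict_sorted_nth_less_iff[OF assms] by fastforce
  show ?thesis unfolding inversions_def no_inversion by simp
qed

lemma count_below_Suc:
  "finite S \<Longrightarrow> count_below S (Suc i) = count_below S i + (if i \<in> S then 1 else 0)"
proof -
  assume "finite S"
  have "{y \<in> S. y < Suc i} = {y \<in> S. y < i} \<union> (S \<inter> {i})" by auto
  with \<open>finite S\<close> show ?thesis by (simp add: count_below_def card_Un_disjoint)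
qed

lemma count_below_exchange:
  assumes "finite S" "a \<in> S" "b \<notin> S" "a < k \<longleftrightarrow> b < k"
  shows "count_below (insert b (S - {a})) k = count_below S k"
proof (cases "b < k")
  case True
  let ?below = "{y \<in> S. y < k}"
  have a: "a \<in> ?below" and fin: "finite ?below" and b: "b \<notin> ?below" using True assms by auto
  have exchanged: "{y \<in> insert b (S - {a}). y < k} = insert b (?below - {a})" using True by auto
  have "card (insert b (?below - {a})) = Suc (card (?below - {a}))"
    using fin b by (intro card_insert_disjoint) auto
  also have "\<dots> = card ?below" using card_Suc_Diff1[OF fin a] .
  finally show ?thesis unfolding count_below_def exchanged .
next
  case False
  then have "{y \<in> insert b (S - {a}). y < k} = {y \<in> S. y < k}" using assms by auto
  then show ?thesis by (simp add: count_below_def)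
qed

lemma wtL_qwedge:
  assumes "finite T"
  shows "g (wtL i ks) * qwedge q T ks
    = g ((if i \<in> T then 1 else 0) - (if Suc i \<in> T then 1 else 0)) * qwedge q T ks"
proof (cases "distinct ks \<and> set ks = T")
  case True
  then have "wtL i ks = sum (wt i) T" by (auto simp: wtL_def sum_list_distinct_conv_sum_set)
  also have "\<dots> = (if i \<in> T then 1 else 0) - (if Suc i \<in> T then 1 else 0)"
    using assms by (simp add: wt_def sum_subtractf sum.delta')
  finally show ?thesis by simp
next
  case False
  then show ?thesis by (auto simp: qwedge_def)
qed

lemma e_tensor_qwedge:
  assumes "q * qi = 1" and "finite S"
  shows "e_tensor q qi i (qwedge q S) ks =
    (if Suc i \<in> S \<and> i \<notin> S then qwedge q (insert i (S - {Suc i})) ks else 0)"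
  using assms(2)
proof (induction ks arbitrary: S)
  case Nil
  then show ?case by (simp add: qwedge_Nil)
next
  case (Cons k ks)
  let ?S' = "insert i (S - {Suc i})"
  define c where "c = (if k \<in> S then (- q) ^ count_below S k else 0)"
  have "(\<lambda>ys. qwedge q S (k # ys)) = (\<lambda>ys. c * qwedge q (S - {k}) ys)"
    by (simp add: qwedge_Cons c_def)
  then have expand: "e_tensor q qi i (qwedge q S) (k # ks)
      = c * (if Suc i \<in> S - {k} \<and> i \<notin> S - {k}
          then qwedge q (insert i (S - {k} - {Suc i})) ks else 0)
      + (if k = i then qpow q qi (- wtL i ks) * qwedge q S (Suc i # ks) else 0)"
    using Cons by (simp add: e_tensor_scale)
  consider (at_i) "k = i" | (at_Suc_i) "k = Suc i" | (elsewhere) "k \<noteq> i" "k \<noteq> Suc i" by blast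
  then show ?case
  proof cases
    case at_i
    have below: "count_below ?S' i = count_below S i"
      unfolding count_below_def by (rule arg_cong[where f = card]) auto
    have weight: "qpow q qi (- wtL i ks) * qwedge q (S - {Suc i}) ks
        = (if i \<in> S then qi else 1) * qwedge q (S - {Suc i}) ks"
      using wtL_qwedge[of "S - {Suc i}" "\<lambda>w. qpow q qi (- w)"] Cons.prems by simp
    show ?thesis
    proof (cases "i \<in> S")
      case True
      have "insert i (S - {i} - {Suc i}) = S - {Suc i}" using True by auto
      then show ?thesis using expand weight at_i True
        by (simp add: qwedge_Cons c_def count_below_Suc[OF Cons.prems] algebra_simps
            inverse_pair_cancel[OF assms(1)])
    next
      case False
      then have "?S' - {i} = S - {Suc i}" by auto
      then show ?thesis using expand weight at_i False below
        by (simp add: qwedge_Cons c_def count_below_Suc[OF Cons.prems]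
            mult.left_commute[of "qpow q qi _"])
    qed
  next
    case at_Suc_i
    then show ?thesis using expand by (simp add: qwedge_Cons)
  next
    case elsewhere
    have "count_below ?S' k = count_below S k" if "Suc i \<in> S" "i \<notin> S"
      by (rule count_below_exchange[OF Cons.prems that]) (use elsewhere in arith)
    moreover have "insert i (S - {k} - {Suc i}) = ?S' - {k}" using elsewhere by auto
    ultimately show ?thesis using expand elsewhere by (auto simp: qwedge_Cons c_def)
  qed
qed

lemma f_tensor_qwedge:
  assumes "q * qi = 1" and "finite S"
  shows "f_tensor q qi i (qwedge q S) ks =
    (if i \<in> S \<and> Suc i \<notin> S then qwedge q (insert (Suc i) (S - {i})) ks else 0)"
  using assms(2)
proof (induction ks arbitrary: S)
  case Nil
  then show ?case by (simp add: qwedge_Nil)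
next
  case (Cons k ks)
  let ?S' = "insert (Suc i) (S - {i})"
  define c where "c = (if k \<in> S then (- q) ^ count_below S k else 0)"
  have "(\<lambda>ys. qwedge q S (k # ys)) = (\<lambda>ys. c * qwedge q (S - {k}) ys)"
    by (simp add: qwedge_Cons c_def)
  then have expand: "f_tensor q qi i (qwedge q S) (k # ks)
      = qpow q qi (wt i k) * (c * (if i \<in> S - {k} \<and> Suc i \<notin> S - {k}
          then qwedge q (insert (Suc i) (S - {k} - {i})) ks else 0))
      + (if k = Suc i then qwedge q S (i # ks) else 0)"
    using Cons by (simp add: f_tensor_scale)
  consider (at_Suc_i) "k = Suc i" | (at_i) "k = i" | (elsewhere) "k \<noteq> i" "k \<noteq> Suc i" by blast
  then show ?case
  proof cases
    case at_Suc_i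
    then have weight: "qpow q qi (wt i k) = qi" by (simp add: wt_def)
    show ?thesis
    proof (cases "Suc i \<in> S")
      case True
      have "insert (Suc i) (S - {Suc i} - {i}) = S - {i}" using True by auto
      then show ?thesis using expand weight at_Suc_i True
        by (simp add: qwedge_Cons c_def count_below_Suc[OF Cons.prems] algebra_simps
            inverse_pair_cancel[OF assms(1)])
    next
      case False
      then have "?S' - {Suc i} = S - {i}" by auto
      moreover have "count_below ?S' (Suc i) = count_below S i"
        unfolding count_below_def using False by (intro arg_cong[where f = card]) auto
      ultimately show ?thesis using expand at_Suc_i False by (simp add: qwedge_Cons c_def)
    qed
  next
    case at_i
    then show ?thesis using expand by (simp add: qwedge_Cons)
  next
    case elsewhere
    then have weight: "qpow q qi (wt i k) = 1" by (simp add: wt_def)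
    have "count_below ?S' k = count_below S k" if "i \<in> S" "Suc i \<notin> S"
      by (rule count_below_exchange[OF Cons.prems that]) (use elsewhere in arith)
    moreover have "insert (Suc i) (S - {k} - {i}) = ?S' - {k}" using elsewhere by auto
    ultimately show ?thesis using expand weight elsewhere by (auto simp: qwedge_Cons c_def)
  qed
qed

lemma count_list_le_1_if_distinct: "distinct xs \<Longrightarrow> count_list xs x \<le> 1"
  by (induction xs) (auto simp: count_list_0_iff)

lemma matT_GE_nonzero_imp_count:
  "matT q qi (GE i l) ks js \<noteq> 0 \<Longrightarrow> l \<le> count_list js (Suc i)"
proof (induction ks arbitrary: js l)
  case Nil
  then show ?case by (cases js) (auto split: if_splits)
next
  case (Cons k ks)
  then obtain j js' where js: "js = j # js'" by (cases js) auto
  from Cons.prems obtain a where "a \<le> l" and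
    "q ^ (a * (l - a)) * matV q qi (GE i a) k j * qpow q qi (- (int a * wtL i ks))
       * matT q qi (GE i (l - a)) ks js' \<noteq> 0"
    unfolding js by (auto dest: sum.not_neutral_contains_not_neutral)
  then have "matV q qi (GE i a) k j \<noteq> 0" "matT q qi (GE i (l - a)) ks js' \<noteq> 0"
    by (metis mult_zero_left mult_zero_right)+
  then have "a = 0 \<or> a = 1 \<and> j = Suc i" "l - a \<le> count_list js' (Suc i)"
    by (auto split: if_splits dest: Cons.IH)
  with \<open>a \<le> l\<close> show ?case unfolding js by auto
qed

lemma matT_GF_nonzero_imp_count:
  "matT q qi (GF i l) ks js \<noteq> 0 \<Longrightarrow> l \<le> count_list js i"
proof (induction ks arbitrary: js l)
  case Nil
  then show ?case by (cases js) (auto split: if_splits)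
next
  case (Cons k ks)
  then obtain j js' where js: "js = j # js'" by (cases js) auto
  from Cons.prems obtain a where "a \<le> l" and
    "q ^ (a * (l - a)) * qpow q qi (int a * wt i k) * matV q qi (GF i (l - a)) k j
       * matT q qi (GF i a) ks js' \<noteq> 0"
    unfolding js by (auto dest: sum.not_neutral_contains_not_neutral)
  then have "matV q qi (GF i (l - a)) k j \<noteq> 0" "matT q qi (GF i a) ks js' \<noteq> 0"
    by (metis mult_zero_left mult_zero_right)+
  then have "l - a = 0 \<or> l - a = 1 \<and> j = i" "a \<le> count_list js' i"
    by (auto split: if_splits dest: Cons.IH)
  with \<open>a \<le> l\<close> show ?case unfolding js by auto
qed

lemma actT_GE_qwedge_higher:
  assumes "2 \<le> l"
  shows "actT q qi n m (GE i l) (qwedge q S) ks = 0"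
  unfolding actT_def
proof (intro sum.neutral ballI)
  fix js
  have "matT q qi (GE i l) ks js = 0" if "distinct js"
    using matT_GE_nonzero_imp_count count_list_le_1_if_distinct[OF that, of "Suc i"] assms
    by fastforce
  then show "matT q qi (GE i l) ks js * qwedge q S js = 0" by (auto simp: qwedge_def)
qed

lemma actT_GF_qwedge_higher:
  assumes "2 \<le> l"
  shows "actT q qi n m (GF i l) (qwedge q S) ks = 0"
  unfolding actT_def
proof (intro sum.neutral ballI)
  fix js
  have "matT q qi (GF i l) ks js = 0" if "distinct js"
    using matT_GF_nonzero_imp_count count_list_le_1_if_distinct[OF that, of i] assms
    by fastforce
  then show "matT q qi (GF i l) ks js * qwedge q S js = 0" by (auto simp: qwedge_def)
qed

section \<open>The map kappa\<close>

lemma place_perm_eq_permute_list: "place_perm xs w = permute_list w xs"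
  by (simp add: place_perm_def permute_list_def)

lemma permute_list_inj_on_permutations:
  assumes "distinct xs" "w permutes {..<length xs}" "w' permutes {..<length xs}"
    and "permute_list w xs = permute_list w' xs"
  shows "w = w'"
proof
  fix t
  show "w t = w' t"
  proof (cases "t < length xs")
    case True
    then have "xs ! w t = xs ! w' t"
      using assms(4) permute_list_nth[OF assms(2) True] permute_list_nth[OF assms(3) True] by simp
    moreover have "w t < length xs" "w' t < length xs"
      using True assms(2,3) by (auto dest: permutes_in_image)
    ultimately show ?thesis using assms(1) by (simp add: nth_eq_iff_index_eq)
  next
    case False
    then show ?thesis using assms(2,3) by (simp add: permutes_not_in)
  qed
qed

lemma perm_len_eq_inversions:
  assumes "sorted_wrt (<) xs" "w permutes {..<length xs}"
  shows "perm_len (length xs) w = inversions (permute_list w xs)"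
proof -
  have "w b < w a \<longleftrightarrow> permute_list w xs ! b < permute_list w xs ! a"
    if "a < length xs" "b < length xs" for a b
  proof -
    have "w a < length xs" "w b < length xs" using that assms(2) by (auto dest: permutes_in_image)
    with that assms show ?thesis by (simp add: permute_list_nth strict_sorted_nth_less_iff)
  qed
  then show ?thesis unfolding perm_len_def inversions_def
    by (intro arg_cong[where f = card]) auto
qed

lemma sum_permutations_place_perm:
  fixes q :: "'a::comm_ring_1"
  assumes "sorted_wrt (<) xs" "length xs = m"
  shows "(\<Sum>w | w permutes {..<m}. (- q) ^ perm_len m w * (if ks = place_perm xs w then 1 else 0))
    = qwedge q (set xs) ks"
proof (cases "distinct ks \<and> set ks = set xs")
  case True
  have "distinct xs" using assms(1) by (simp add: strict_sorted_iff)
  with True have "mset ks = mset xs" by (simp flip: set_eq_iff_mset_eq_distinct)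
  then obtain w0 where w0: "w0 permutes {..<m}" "permute_list w0 xs = ks"
    using assms(2) by (metis mset_eq_permutation)
  have "ks = place_perm xs w \<longleftrightarrow> w = w0" if "w permutes {..<m}" for w
    using permute_list_inj_on_permutations[OF \<open>distinct xs\<close>] that w0 assms(2)
    by (auto simp: place_perm_eq_permute_list)
  then have "(\<Sum>w | w permutes {..<m}. (- q) ^ perm_len m w * (if ks = place_perm xs w then 1 else 0))
      = (\<Sum>w | w permutes {..<m}. if w = w0 then (- q) ^ perm_len m w else 0)"
    by (intro sum.cong) auto
  also have "\<dots> = (- q) ^ inversions ks"
    using w0 assms perm_len_eq_inversions[OF assms(1)] by (simp add: finite_permutations)
  finally show ?thesis using True by (simp add: qwedge_def)
next
  case False
  have "ks \<noteq> place_perm xs w" if "w permutes {..<m}" for w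
    using False that assms by (auto simp: place_perm_eq_permute_list strict_sorted_iff)
  then show ?thesis using False by (auto simp: qwedge_def intro: sum.neutral)
qed

lemma
  assumes "i \<in> {1..n}"
  shows sorted_omit: "sorted_wrt (<) (omit n i)"
    and set_omit: "set (omit n i) = {1..n} - {i}"
    and length_omit: "length (omit n i) = n - 1"
proof -
  show "sorted_wrt (<) (omit n i)" unfolding omit_def by (rule sorted_wrt_filter[OF sorted_wrt_upt])
  show set: "set (omit n i) = {1..n} - {i}" unfolding omit_def by auto
  have "distinct (omit n i)" by (simp add: omit_def)
  then show "length (omit n i) = n - 1"
    using assms set by (metis distinct_card card_Diff_singleton card_atLeastAtMost diff_Suc_1
        finite_atLeastAtMost)
qed

lemma kappa_coef_eq_qwedge:
  "i \<in> {1..n} \<Longrightarrow> kappa_coef q n i = (\<lambda>ks. (- q) ^ i * qwedge q ({1..n} - {i}) ks)"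
  by (simp add: fun_eq_iff kappa_coef_def sum_permutations_place_perm sorted_omit length_omit set_omit)

text \<open>The left-hand sides below are the coefficient of \<open>v_ks\<close> in the image of \<open>g \<cdot> v_j\<^sup>*\<close>.\<close>

lemma kappa_coef_equivariant_GK:
  assumes "q * qi = 1" "1 \<le> i" "i < n" "j \<in> {1..n}" "ks \<in> tup n (n - 1)"
  shows "(\<Sum>k\<in>{1..n}. matS q qi (GK i z) j k * kappa_coef q n k ks)
    = actT q qi n (n - 1) (GK i z) (kappa_coef q n j) ks"
proof -
  have "(\<Sum>k\<in>{1..n}. matS q qi (GK i z) j k * kappa_coef q n k ks)
      = qpow q qi (- z * wt i j) * kappa_coef q n j ks"
    using assms(4) by (simp add: if_distrib[of "\<lambda>a. a * _"] cong: if_cong)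
  also have "\<dots> = qpow q qi (z * wtL i ks) * kappa_coef q n j ks"
  proof -
    let ?S = "{1..n} - {j}"
    have "(if i \<in> ?S then 1 else 0) - (if Suc i \<in> ?S then 1 else 0) = - wt i j"
      using assms(2-4) by (auto simp: wt_def)
    then have "qpow q qi (- z * wt i j) * qwedge q ?S ks = qpow q qi (z * wtL i ks) * qwedge q ?S ks"
      using wtL_qwedge[of ?S "\<lambda>w. qpow q qi (z * w)" i ks q] by simp
    then show ?thesis using assms(4) by (simp add: kappa_coef_eq_qwedge) (metis mult.left_commute)
  qed
  finally show ?thesis using actT_GK[OF assms(1,5)] by simp
qed

lemma kappa_coef_equivariant_GE:
  assumes "q * qi = 1" "1 \<le> i" "i < n" "j \<in> {1..n}" "ks \<in> tup n (n - 1)"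
  shows "(\<Sum>k\<in>{1..n}. matS q qi (GE i l) j k * kappa_coef q n k ks)
    = actT q qi n (n - 1) (GE i l) (kappa_coef q n j) ks"
proof -
  let ?S = "{1..n} - {j}"
  have rhs: "actT q qi n (n - 1) (GE i l) (kappa_coef q n j) ks
      = (- q) ^ j * actT q qi n (n - 1) (GE i l) (qwedge q ?S) ks"
    using assms(4) by (simp add: kappa_coef_eq_qwedge actT_scale)
  consider (zero) "l = 0" | (one) "l = 1" | (higher) "2 \<le> l" by linarith
  then show ?thesis
  proof cases
    case zero
    then show ?thesis
      using assms(4,5) by (simp add: actT_GE_0 if_distrib[of "\<lambda>a. a * _"] cong: if_cong)
  next
    case one
    have "(\<Sum>k\<in>{1..n}. matS q qi (GE i l) j k * kappa_coef q n k ks)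
        = (if j = i then - qi * kappa_coef q n (Suc i) ks else 0)"
      using one assms(3) by (simp add: wt_def sum_negf if_distrib[of "\<lambda>a. a * _"] cong: if_cong)
    also have "\<dots> = (- q) ^ j * (if Suc i \<in> ?S \<and> i \<notin> ?S
        then qwedge q (insert i (?S - {Suc i})) ks else 0)"
    proof (cases "j = i")
      case True
      then have "insert i (?S - {Suc i}) = {1..n} - {Suc i}" using assms(2,3) by auto
      with True assms(1,3) show ?thesis
        by (simp add: kappa_coef_eq_qwedge mult.assoc inverse_pair_cancel)
    qed (use assms(2,3) in auto)
    also have "\<dots> = (- q) ^ j * e_tensor q qi i (qwedge q ?S) ks"
      by (subst e_tensor_qwedge[OF assms(1)]) simp_all
    also have "\<dots> = actT q qi n (n - 1) (GE i l) (kappa_coef q n j) ks"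
      using one rhs actT_GE_1[where q = q and qi = qi, OF Suc_leI[OF assms(3)] assms(5)] by simp
    finally show ?thesis .
  next
    case higher
    then show ?thesis using rhs by (simp add: actT_GE_qwedge_higher)
  qed
qed

lemma kappa_coef_equivariant_GF:
  assumes "q * qi = 1" "1 \<le> i" "i < n" "j \<in> {1..n}" "ks \<in> tup n (n - 1)"
  shows "(\<Sum>k\<in>{1..n}. matS q qi (GF i l) j k * kappa_coef q n k ks)
    = actT q qi n (n - 1) (GF i l) (kappa_coef q n j) ks"
proof -
  let ?S = "{1..n} - {j}"
  have rhs: "actT q qi n (n - 1) (GF i l) (kappa_coef q n j) ks
      = (- q) ^ j * actT q qi n (n - 1) (GF i l) (qwedge q ?S) ks"
    using assms(4) by (simp add: kappa_coef_eq_qwedge actT_scale)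
  consider (zero) "l = 0" | (one) "l = 1" | (higher) "2 \<le> l" by linarith
  then show ?thesis
  proof cases
    case zero
    then show ?thesis
      using assms(4,5) by (simp add: actT_GF_0 if_distrib[of "\<lambda>a. a * _"] cong: if_cong)
  next
    case one
    have "(\<Sum>k\<in>{1..n}. matS q qi (GF i l) j k * kappa_coef q n k ks)
        = (if j = Suc i then - q * kappa_coef q n i ks else 0)"
      using one assms(2,3)
      by (simp add: wt_def sum_negf if_distrib[of "\<lambda>a. a * _"] if_distrib[of "\<lambda>a. q * a"]
          cong: if_cong)
    also have "\<dots> = (- q) ^ j * (if i \<in> ?S \<and> Suc i \<notin> ?S
        then qwedge q (insert (Suc i) (?S - {i})) ks else 0)"
    proof (cases "j = Suc i")
      case True
      then have "insert (Suc i) (?S - {i}) = {1..n} - {i}" using assms(3) by auto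
      with True assms(2,3) show ?thesis by (simp add: kappa_coef_eq_qwedge)
    qed (use assms(2-4) in auto)
    also have "\<dots> = (- q) ^ j * f_tensor q qi i (qwedge q ?S) ks"
      by (subst f_tensor_qwedge[OF assms(1)]) simp_all
    also have "\<dots> = actT q qi n (n - 1) (GF i l) (kappa_coef q n j) ks"
      using one rhs actT_GF_1[where q = q and qi = qi, OF assms(2) less_imp_le[OF assms(3)] assms(5)]
      by simp
    finally show ?thesis .
  next
    case higher
    then show ?thesis using rhs by (simp add: actT_GF_qwedge_higher)
  qed
qed

lemma kappa_coef_equivariant:
  assumes "q * qi = 1" "g \<in> gens n" "j \<in> {1..n}" "ks \<in> tup n (n - 1)"
  shows "(\<Sum>k\<in>{1..n}. matS q qi g j k * kappa_coef q n k ks)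
    = actT q qi n (n - 1) g (kappa_coef q n j) ks"
  using assms(2) unfolding gens_def
proof (elim UnE CollectE exE conjE)
  fix i z assume "g = GK i z" "1 \<le> i" "i < n"
  then show ?thesis using kappa_coef_equivariant_GK[OF assms(1) _ _ assms(3,4)] by simp
next
  fix i l assume "g = GE i l" "1 \<le> i" "i < n"
  then show ?thesis using kappa_coef_equivariant_GE[OF assms(1) _ _ assms(3,4)] by simp
next
  fix i l assume "g = GF i l" "1 \<le> i" "i < n"
  then show ?thesis using kappa_coef_equivariant_GF[OF assms(1) _ _ assms(3,4)] by simp
qed

lemma kappa_actD:
  assumes "q * qi = 1" "g \<in> gens n" "ks \<in> tup n (n - 1)"
  shows "kappa q n (actD q qi n g c) ks = actT q qi n (n - 1) g (kappa q n c) ks"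
proof -
  have "kappa q n (actD q qi n g c) ks
      = (\<Sum>j\<in>{1..n}. c j * (\<Sum>k\<in>{1..n}. matS q qi g j k * kappa_coef q n k ks))"
    unfolding kappa_def actD_def sum_distrib_left sum_distrib_right
    by (subst sum.swap) (simp add: mult_ac)
  also have "\<dots> = (\<Sum>j\<in>{1..n}. c j * actT q qi n (n - 1) g (kappa_coef q n j) ks)"
    using kappa_coef_equivariant[OF assms(1,2) _ assms(3)] by simp
  also have "\<dots> = actT q qi n (n - 1) g (kappa q n c) ks"
    unfolding actT_def kappa_def sum_distrib_left sum_distrib_right
    by (subst (2) sum.swap) (simp add: mult_ac)
  finally show ?thesis .
qed

lemma kappa_omit:
  assumes "i \<in> {1..n}"
  shows "kappa q n c (omit n i) = (- q) ^ i * c i"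
proof -
  have "distinct (omit n i)" "inversions (omit n i) = 0"
    using sorted_omit[OF assms] by (simp_all add: strict_sorted_iff inversions_strict_sorted)
  moreover have "set (omit n i) = {1..n} - {j} \<longleftrightarrow> j = i" if "j \<in> {1..n}" for j
    using assms that unfolding set_omit[OF assms] by blast
  ultimately have "kappa_coef q n j (omit n i) = (if j = i then (- q) ^ i else 0)"
    if "j \<in> {1..n}" for j
    using that by (simp add: kappa_coef_eq_qwedge qwedge_def)
  then have "kappa q n c (omit n i) = (\<Sum>j\<in>{1..n}. if j = i then c j * (- q) ^ i else 0)"
    unfolding kappa_def by (intro sum.cong) auto
  with assms show ?thesis by (simp add: mult.commute)
qed

theorem lemma2p2:
  fixes q qi :: "'a::comm_ring_1" and n :: nat
  assumes "q * qi = 1" and "1 \<le> n"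
  shows "(\<forall>g\<in>gens n. \<forall>c. \<forall>ks\<in>tup n (n - 1).
            kappa q n (actD q qi n g c) ks = actT q qi n (n - 1) g (kappa q n c) ks)
       \<and> (\<forall>c c'. (\<forall>ks\<in>tup n (n - 1). kappa q n c ks = kappa q n c' ks)
                  \<longrightarrow> (\<forall>i\<in>{1..n}. c i = c' i))"
proof (intro conjI ballI allI impI)
  fix g c ks assume "g \<in> gens n" "ks \<in> tup n (n - 1)"
  then show "kappa q n (actD q qi n g c) ks = actT q qi n (n - 1) g (kappa q n c) ks"
    using kappa_actD[OF assms(1)] by blast
next
  fix c c' i
  assume same: "\<forall>ks\<in>tup n (n - 1). kappa q n c ks = kappa q n c' ks" and i: "i \<in> {1..n}"
  have "omit n i \<in> tup n (n - 1)" using i by (auto simp: tup_def set_omit length_omit)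
  with same have "(- qi) ^ i * ((- q) ^ i * c i) = (- qi) ^ i * ((- q) ^ i * c' i)"
    by (simp add: kappa_omit[OF i, symmetric])
  moreover have "(- qi) ^ i * (- q) ^ i = 1"
    using assms(1) by (simp add: mult.commute flip: power_mult_distrib)
  ultimately show "c i = c' i" by (simp add: mult.assoc[symmetric])
qed

end
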